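(* Let $\mathrm{M}$ be a simple matroid of rank at least $3$ on ground set $E$, and let $i\in E$ be an element that is not a coloop such that the deletion $\mathrm{M}\setminus\{i\}$ is a Boolean matroid. Then there exists a rank-$1$ flat $F$ of $\mathrm{M}$ with $F\in\underline{S}_i$.
   Context: $\underline{S}_i$ is the family of flats $F$ of $\mathrm{M}$ such that $\varnothing\subsetneq F\subsetneq E\setminus\{i\}$ and $F\cup\{i\}$ is a flat. A Boolean matroid is one in which every subset of the ground set is independent. *)

theory Defs
  imports Main
begin

definition matroid :: "'a set \<Rightarrow> ('a set \<Rightarrow> bool) \<Rightarrow> bool" where
  "matroid E indep \<longleftrightarrow>
     finite E \<and> indep {} \<and>
     (\<forall>X. indep X \<longrightarrow> X \<subseteq> E) \<and>
     (\<forall>X Y. indep X \<and> Y \<subseteq> X \<longrightarrow> indep Y) \<and>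
     (\<forall>X Y. indep X \<and> indep Y \<and> card X < card Y \<longrightarrow>
        (\<exists>y \<in> Y - X. indep (insert y X)))"

definition rk :: "('a set \<Rightarrow> bool) \<Rightarrow> 'a set \<Rightarrow> nat" where
  "rk indep X = Max {card I | I. I \<subseteq> X \<and> indep I}"

definition basis :: "'a set \<Rightarrow> ('a set \<Rightarrow> bool) \<Rightarrow> 'a set \<Rightarrow> bool" where
  "basis E indep B \<longleftrightarrow> indep B \<and> B \<subseteq> E \<and> (\<forall>x \<in> E - B. \<not> indep (insert x B))"

definition flat :: "'a set \<Rightarrow> ('a set \<Rightarrow> bool) \<Rightarrow> 'a set \<Rightarrow> bool" where
  "flat E indep F \<longleftrightarrow> F \<subseteq> E \<and> (\<forall>x \<in> E - F. rk indep (insert x F) > rk indep F)"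

text \<open>Simple: no loops and no parallel elements.\<close>
definition simple_matroid :: "'a set \<Rightarrow> ('a set \<Rightarrow> bool) \<Rightarrow> bool" where
  "simple_matroid E indep \<longleftrightarrow> (\<forall>x \<in> E. \<forall>y \<in> E. indep {x, y})"

definition coloop :: "'a set \<Rightarrow> ('a set \<Rightarrow> bool) \<Rightarrow> 'a \<Rightarrow> bool" where
  "coloop E indep i \<longleftrightarrow> i \<in> E \<and> (\<forall>B. basis E indep B \<longrightarrow> i \<in> B)"

definition deletion_indep :: "'a set \<Rightarrow> ('a set \<Rightarrow> bool) \<Rightarrow> 'a set \<Rightarrow> ('a set \<Rightarrow> bool)" where
  "deletion_indep E indep D = (\<lambda>X. indep X \<and> X \<subseteq> E - D)"

definition boolean_matroid :: "'a set \<Rightarrow> ('a set \<Rightarrow> bool) \<Rightarrow> bool" where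
  "boolean_matroid E indep \<longleftrightarrow> (\<forall>X. X \<subseteq> E \<longrightarrow> indep X)"

definition S_under :: "'a set \<Rightarrow> ('a set \<Rightarrow> bool) \<Rightarrow> 'a \<Rightarrow> 'a set set" where
  "S_under E indep i = {F. flat E indep F \<and> {} \<subset> F \<and> F \<subset> E - {i} \<and> flat E indep (F \<union> {i})}"

end

theory Submission
  imports Defs
begin

text \<open>Since M \ i is Boolean and i is not a coloop, E - {i} is a basis and E is dependent, so
  E contains exactly one circuit, the fundamental circuit of i. A dependent triple {i, x, y}
  contains it, and since M is simple it has no circuits of size at most two, so every dependent
  triple through i is that circuit: at most one pair {x, y} spans i. Rank at least 3 forces
  |E| \<ge> 4, so some x \<noteq> i lies outside this pair. Then every triple {x, i, y} is independent,
  hence {x, i} is a flat, and so is {x} by simplicity; {x} is the required rank-1 flat.\<close>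

lemma matroid_finite_ground: "matroid E indep \<Longrightarrow> finite E"
  unfolding matroid_def by blast

lemma matroid_indep_empty: "matroid E indep \<Longrightarrow> indep {}"
  unfolding matroid_def by blast

lemma matroid_indep_subset_ground: "matroid E indep \<Longrightarrow> indep X \<Longrightarrow> X \<subseteq> E"
  unfolding matroid_def by blast

lemma matroid_indep_subset: "matroid E indep \<Longrightarrow> indep X \<Longrightarrow> Y \<subseteq> X \<Longrightarrow> indep Y"
  unfolding matroid_def by blast

lemma matroid_augment:
  "matroid E indep \<Longrightarrow> indep X \<Longrightarrow> indep Y \<Longrightarrow> card X < card Y \<Longrightarrow>
    \<exists>y \<in> Y - X. indep (insert y X)"
  unfolding matroid_def by blast

lemma matroid_indep_finite: "matroid E indep \<Longrightarrow> indep X \<Longrightarrow> finite X"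
  by (meson finite_subset matroid_finite_ground matroid_indep_subset_ground)

lemma finite_card_subsets: "finite X \<Longrightarrow> finite {card I | I. I \<subseteq> X \<and> P I}"
  by (rule finite_subset[of _ "{..card X}"]) (auto intro: card_mono)

lemma rk_indep:
  assumes "matroid E indep" and "indep X"
  shows "rk indep X = card X"
  unfolding rk_def
proof (rule Max_eqI)
  have "finite X" using assms by (rule matroid_indep_finite)
  then show "finite {card I | I. I \<subseteq> X \<and> indep I}" by (rule finite_card_subsets)
  show "n \<le> card X" if "n \<in> {card I | I. I \<subseteq> X \<and> indep I}" for n
    using that \<open>finite X\<close> card_mono by blast
qed (use assms in blast)

lemma rk_witness:
  assumes "matroid E indep" and "X \<subseteq> E"
  obtains I where "I \<subseteq> X" "indep I" "card I = rk indep X"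
proof -
  let ?S = "{card I | I. I \<subseteq> X \<and> indep I}"
  have "finite X" using assms(2) matroid_finite_ground[OF assms(1)] by (rule finite_subset)
  then have "finite ?S" by (rule finite_card_subsets)
  moreover have "?S \<noteq> {}" using matroid_indep_empty[OF assms(1)] by blast
  ultimately have "rk indep X \<in> ?S" unfolding rk_def by (rule Max_in)
  then obtain I where "rk indep X = card I" "I \<subseteq> X" "indep I" by blast
  then show thesis using that by simp
qed

lemma rk_less_card_if_dependent:
  assumes "matroid E indep" and "X \<subseteq> E" and "\<not> indep X"
  shows "rk indep X < card X"
proof -
  obtain I where I: "I \<subseteq> X" "indep I" "card I = rk indep X"
    using rk_witness assms(1,2) .
  have "finite X" using assms(2) matroid_finite_ground[OF assms(1)] by (rule finite_subset)
  moreover have "I \<subset> X" using I assms(3) by blast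
  ultimately show ?thesis using I(3) by (metis psubset_card_mono)
qed

lemma indep_extend_to_card:
  assumes "matroid E indep" and "indep I" and "indep J" and "card I \<le> card J"
  shows "\<exists>K. I \<subseteq> K \<and> K \<subseteq> I \<union> J \<and> indep K \<and> card K = card J"
  using assms(2,4)
proof (induction "card J - card I" arbitrary: I)
  case 0
  then show ?case by (intro exI[of _ I]) simp
next
  case (Suc n)
  then have "card I < card J" by linarith
  then obtain y where y: "y \<in> J - I" "indep (insert y I)"
    using matroid_augment[OF assms(1) Suc.prems(1) assms(3)] by blast
  have "finite I" using assms(1) Suc.prems(1) by (rule matroid_indep_finite)
  then have "card (insert y I) = Suc (card I)" using y(1) by simp
  then obtain K where "insert y I \<subseteq> K" "K \<subseteq> insert y I \<union> J" "indep K" "card K = card J"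
    using Suc.hyps(1)[of "insert y I"] Suc.hyps(2) Suc.prems(2) y(2) by fastforce
  then show ?case using y(1) by blast
qed

text \<open>The uniqueness of the fundamental circuit of e, phrased without circuits.\<close>

lemma dependent_insert_Int:
  assumes m: "matroid E indep" and "indep X" and "A \<subseteq> X" and "B \<subseteq> X"
    and depA: "\<not> indep (insert e A)" and depB: "\<not> indep (insert e B)"
  shows "\<not> indep (insert e (A \<inter> B))"
proof
  assume indep_Int: "indep (insert e (A \<inter> B))"
  have indep_Un: "indep (A \<union> B)"
    using m \<open>indep X\<close> by (rule matroid_indep_subset) (use assms(3,4) in blast)
  have finite_Un: "finite (A \<union> B)" using m indep_Un by (rule matroid_indep_finite)
  have "\<not> insert e A \<subseteq> A \<union> B" "\<not> insert e B \<subseteq> A \<union> B"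
    using depA depB matroid_indep_subset[OF m indep_Un] by blast+
  then have e: "e \<notin> A \<union> B" by blast
  have "A \<inter> B \<noteq> A" using indep_Int depA by auto
  then have "A \<inter> B \<subset> A \<union> B" by blast
  then have "card (A \<inter> B) < card (A \<union> B)" by (rule psubset_card_mono[OF finite_Un])
  with e finite_Un have "card (insert e (A \<inter> B)) \<le> card (A \<union> B)" by simp
  then obtain K where K: "insert e (A \<inter> B) \<subseteq> K" "K \<subseteq> insert e (A \<union> B)"
      "indep K" "card K = card (A \<union> B)"
    using indep_extend_to_card[OF m indep_Int indep_Un] by auto
  have "finite K" using m K(3) by (rule matroid_indep_finite)
  then have "card (insert e (A \<union> B) - K) = card (insert e (A \<union> B)) - card K"
    using K(2) by (rule card_Diff_subset)
  also have "\<dots> = 1" using K(4) e finite_Un by simp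
  finally obtain z where z: "insert e (A \<union> B) - K = {z}" by (rule card_1_singletonE)
  then have "insert e A \<subseteq> K \<or> insert e B \<subseteq> K" using K(1) by blast
  then show False using depA depB matroid_indep_subset[OF m K(3)] by blast
qed

lemma flat_if_indep_insert:
  assumes "matroid E indep" and "indep F" and "\<forall>y \<in> E - F. indep (insert y F)"
  shows "flat E indep F"
  unfolding flat_def
proof (intro conjI ballI)
  show "F \<subseteq> E" using assms(1,2) by (rule matroid_indep_subset_ground)
  fix y assume "y \<in> E - F"
  moreover have "finite F" using assms(1,2) by (rule matroid_indep_finite)
  ultimately show "rk indep F < rk indep (insert y F)"
    using assms rk_indep[OF assms(1)] by simp
qed

lemma coloop_if_indep_ground:
  assumes "matroid E indep" and "indep E" and "i \<in> E"
  shows "coloop E indep i"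
  unfolding coloop_def basis_def
  using assms(3) matroid_indep_subset[OF assms(1,2)] by blast

lemma simple_indep_insert_subset_singleton:
  "matroid E indep \<Longrightarrow> simple_matroid E indep \<Longrightarrow> i \<in> E \<Longrightarrow> x \<in> E \<Longrightarrow> S \<subseteq> {x} \<Longrightarrow>
    indep (insert i S)"
  unfolding simple_matroid_def by (meson insert_mono matroid_indep_subset)

lemma dependent_triples_unique:
  assumes m: "matroid E indep" and s: "simple_matroid E indep" and "i \<in> E"
    and indep: "indep (E - {i})"
    and xy: "x \<in> E - {i}" "y \<in> E - {i}" and uv: "u \<in> E - {i}" "v \<in> E - {i}"
    and dep_xy: "\<not> indep {i, x, y}" and dep_uv: "\<not> indep {i, u, v}"
  shows "{x, y} = {u, v}"
proof -
  have "\<not> indep (insert i ({x, y} \<inter> {u, v}))"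
    by (rule dependent_insert_Int[OF m indep]) (use xy uv dep_xy dep_uv in auto)
  then have "\<not> ({x, y} \<inter> {u, v} \<subseteq> {w})" if "w \<in> E" for w
    using simple_indep_insert_subset_singleton[OF m s \<open>i \<in> E\<close> that] by blast
  then have "x \<in> {u, v}" "y \<in> {u, v}"
    using xy by (blast, blast)
  moreover have "x \<noteq> y" "u \<noteq> v"
    using dep_xy dep_uv s xy uv \<open>i \<in> E\<close> unfolding simple_matroid_def by auto
  ultimately show ?thesis by auto
qed

lemma ex_point_with_indep_triples:
  assumes m: "matroid E indep" and s: "simple_matroid E indep" and "i \<in> E"
    and indep: "indep (E - {i})" and "card E \<ge> 4"
  shows "\<exists>x \<in> E - {i}. \<forall>y \<in> E - {x, i}. indep (insert y {x, i})"
proof -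
  obtain a b where ab: "\<And>x y. x \<in> E - {i} \<Longrightarrow> y \<in> E - {i} \<Longrightarrow> \<not> indep {i, x, y} \<Longrightarrow>
    {x, y} = {a, b}"
  proof (cases "\<exists>a \<in> E - {i}. \<exists>b \<in> E - {i}. \<not> indep {i, a, b}")
    case True
    then obtain a b where "a \<in> E - {i}" "b \<in> E - {i}" "\<not> indep {i, a, b}" by blast
    then show thesis by (intro that[of a b] dependent_triples_unique[OF m s \<open>i \<in> E\<close> indep])
  qed blast \<comment> \<open>with no dependent triple through i, any a and b will do\<close>
  have "card {i, a, b} \<le> 3" by (simp add: card_insert_le_m1)
  then have "card {i, a, b} < card E" using \<open>card E \<ge> 4\<close> by linarith
  then have "\<not> E \<subseteq> {i, a, b}" by (meson card_mono finite.emptyI finite_insert leD)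
  then obtain x where x: "x \<in> E" "x \<notin> {i, a, b}" by blast
  have "indep (insert y {x, i})" if "y \<in> E - {x, i}" for y
  proof (rule ccontr)
    assume "\<not> indep (insert y {x, i})"
    then have "\<not> indep {i, x, y}" by (simp add: insert_commute)
    then have "{x, y} = {a, b}" using ab x that by blast
    then show False using x by blast
  qed
  then show ?thesis using x by blast
qed

theorem lemma3p5:
  fixes E :: "'a set" and indep :: "'a set \<Rightarrow> bool" and i :: 'a
  assumes "matroid E indep"
    and "simple_matroid E indep"
    and "rk indep E \<ge> 3"
    and "i \<in> E"
    and "\<not> coloop E indep i"
    and "boolean_matroid (E - {i}) (deletion_indep E indep {i})"
  shows "\<exists>F. flat E indep F \<and> rk indep F = 1 \<and> F \<in> S_under E indep i"
proof -
  note m = assms(1) and s = assms(2)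
  have indep_del: "indep (E - {i})"
    using assms(6) unfolding boolean_matroid_def deletion_indep_def by blast
  have "\<not> indep E" using coloop_if_indep_ground[OF m _ assms(4)] assms(5) by blast
  then have "rk indep E < card E" by (rule rk_less_card_if_dependent[OF m subset_refl])
  then have card_E: "card E \<ge> 4" using assms(3) by linarith
  obtain x where x: "x \<in> E - {i}" and triples: "\<forall>y \<in> E - {x, i}. indep (insert y {x, i})"
    using ex_point_with_indep_triples[OF m s assms(4) indep_del card_E] by blast
  have pairs: "indep {y, z}" if "y \<in> E" "z \<in> E" for y z
    using s that unfolding simple_matroid_def by blast
  have flat_x: "flat E indep {x}"
    using pairs[of x x] pairs[of _ x] x by (intro flat_if_indep_insert[OF m]) auto
  moreover have "flat E indep ({x} \<union> {i})"
    unfolding insert_is_Un[symmetric]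
    by (rule flat_if_indep_insert[OF m pairs triples]) (use x assms(4) in auto)
  moreover have "{x} \<subset> E - {i}"
  proof -
    have "card (E - {i}) \<ge> 3" using card_E assms(4) matroid_finite_ground[OF m] by simp
    then show ?thesis using x by (cases "E - {i} = {x}") auto
  qed
  ultimately have "{x} \<in> S_under E indep i" unfolding S_under_def by blast
  moreover have "rk indep {x} = 1" using rk_indep[OF m] pairs[of x x] x by simp
  ultimately show ?thesis using flat_x by blast
qed

end
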